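(* Let $G_s$ be a social network, $q$ a query user, $d\ge 1$ an integer, $e$ a set of users (an index node), and $spiv_1,\dots,spiv_h$ social-network pivot users. Let $lb_k(e)=\min_{u\in e} dist_{SN}(u,spiv_k)$ and $ub_k(e)=\max_{u\in e} dist_{SN}(u,spiv_k)$. Define $lb\_dist_{SN}(S,e)=\max_{k=1}^{h} c_k$, where $c_k=lb_k(e)-dist_{SN}(q,spiv_k)$ if $dist_{SN}(q,spiv_k)<lb_k(e)$, $c_k=dist_{SN}(q,spiv_k)-ub_k(e)$ if $dist_{SN}(q,spiv_k)>ub_k(e)$, and $c_k=0$ otherwise. If $lb\_dist_{SN}(S,e)>d$, then for every spatial-social $(k',d,\sigma,\theta)$-truss $S$ containing $q$ (for any $k',\sigma,\theta$ and query topic vector) no user of $e$ belongs to $S$.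
   Context: $dist_{SN}(u,v)$ is the minimum number of hops between users $u$ and $v$ in the social network $G_s$ (treated as a connected graph with symmetric hop distance, so all these distances are finite). The support of an edge in a subgraph $H$ of $G_s$ is the number of triangles of $H$ containing it. A connected subgraph $S$ is a $(k',d)$-truss if every edge of $S$ has support in $S$ at least $k'-2$ and $dist_{SN}(u,v)<d$ for all $u,v\in V(S)$. Users have check-in locations on a road network with shortest-path distance $dist_{RN}$, and $avg\_dist_{RN}(u,v)=\frac{1}{|u.L||v.L|}\sum_i\sum_j dist_{RN}(u.loc_i,v.loc_j)$. Each edge $e_{a,b}$ carries topic probabilities $tp^j_{a,b}$; for a query topic vector $\mathcal{T}_q$ the influence of a path $a_1\to\dots\to a_m$ is $\prod_i\sum_j tp^j_{a_i,a_{i+1}}\mathcal{T}_q^j$. A spatial-social $(k',d,\sigma,\theta)$-truss is a user set $S$ that is a $(k',d)$-truss, satisfies $avg\_dist_{RN}(u,v)<\sigma$ for all $u,v\in S$, and such that for all $u,v\in S$ some path from $u$ to $v$ within $S$ has influence at least $\theta$. *)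

theory Defs
  imports Complex_Main
begin

definition walk :: "('u \<Rightarrow> 'u \<Rightarrow> bool) \<Rightarrow> 'u list \<Rightarrow> bool" where
  "walk E p \<longleftrightarrow> p \<noteq> [] \<and> (\<forall>i. Suc i < length p \<longrightarrow> E (p ! i) (p ! Suc i))"

definition social_network :: "'u set \<Rightarrow> ('u \<Rightarrow> 'u \<Rightarrow> bool) \<Rightarrow> bool" where
  "social_network V E \<longleftrightarrow> finite V \<and> (\<forall>a b. E a b \<longrightarrow> a \<in> V \<and> b \<in> V \<and> E b a \<and> a \<noteq> b)
     \<and> (\<forall>u\<in>V. \<forall>v\<in>V. \<exists>p. walk E p \<and> hd p = u \<and> last p = v)"

definition dist_SN :: "('u \<Rightarrow> 'u \<Rightarrow> bool) \<Rightarrow> 'u \<Rightarrow> 'u \<Rightarrow> nat" where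
  "dist_SN E u v = (LEAST n. \<exists>p. walk E p \<and> hd p = u \<and> last p = v \<and> length p = Suc n)"

definition subgraph :: "('u \<Rightarrow> 'u \<Rightarrow> bool) \<Rightarrow> 'u set \<Rightarrow> 'u set \<Rightarrow> ('u \<times> 'u) set \<Rightarrow> bool" where
  "subgraph E V S ES \<longleftrightarrow> S \<subseteq> V \<and> (\<forall>(a,b)\<in>ES. E a b \<and> a \<in> S \<and> b \<in> S \<and> (b,a) \<in> ES)"

definition support :: "'u set \<Rightarrow> ('u \<times> 'u) set \<Rightarrow> 'u \<Rightarrow> 'u \<Rightarrow> nat" where
  "support S ES a b = card {c \<in> S. (a,c) \<in> ES \<and> (b,c) \<in> ES}"

definition connected_sub :: "'u set \<Rightarrow> ('u \<times> 'u) set \<Rightarrow> bool" where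
  "connected_sub S ES \<longleftrightarrow> (\<forall>u\<in>S. \<forall>v\<in>S. \<exists>p. walk (\<lambda>a b. (a,b) \<in> ES) p \<and> hd p = u \<and> last p = v)"

definition kd_truss :: "'u set \<Rightarrow> ('u \<Rightarrow> 'u \<Rightarrow> bool) \<Rightarrow> 'u set \<Rightarrow> ('u \<times> 'u) set \<Rightarrow> nat \<Rightarrow> nat \<Rightarrow> bool" where
  "kd_truss V E S ES k' d \<longleftrightarrow> subgraph E V S ES \<and> connected_sub S ES
     \<and> (\<forall>(a,b)\<in>ES. int (support S ES a b) \<ge> int k' - 2)
     \<and> (\<forall>u\<in>S. \<forall>v\<in>S. dist_SN E u v < d)"

text \<open>Road network: locations of type 'l, shortest path distance dRN; check-in lists loc u.\<close>
definition avg_dist_RN :: "('l \<Rightarrow> 'l \<Rightarrow> real) \<Rightarrow> ('u \<Rightarrow> 'l list) \<Rightarrow> 'u \<Rightarrow> 'u \<Rightarrow> real" where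
  "avg_dist_RN dRN loc u v =
     (\<Sum>i<length (loc u). \<Sum>j<length (loc v). dRN (loc u ! i) (loc v ! j))
       / (real (length (loc u)) * real (length (loc v)))"

text \<open>Topics are indexed 0..<nT; tp a b j is the probability of topic j on edge (a,b).\<close>
definition influence :: "('u \<Rightarrow> 'u \<Rightarrow> nat \<Rightarrow> real) \<Rightarrow> nat \<Rightarrow> (nat \<Rightarrow> real) \<Rightarrow> 'u list \<Rightarrow> real" where
  "influence tp nT Tq p = (\<Prod>i<length p - 1. \<Sum>j<nT. tp (p ! i) (p ! Suc i) j * Tq j)"

definition ss_truss ::
  "'u set \<Rightarrow> ('u \<Rightarrow> 'u \<Rightarrow> bool) \<Rightarrow> ('l \<Rightarrow> 'l \<Rightarrow> real) \<Rightarrow> ('u \<Rightarrow> 'l list) \<Rightarrow>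
   ('u \<Rightarrow> 'u \<Rightarrow> nat \<Rightarrow> real) \<Rightarrow> nat \<Rightarrow> (nat \<Rightarrow> real) \<Rightarrow>
   'u set \<Rightarrow> ('u \<times> 'u) set \<Rightarrow> nat \<Rightarrow> nat \<Rightarrow> real \<Rightarrow> real \<Rightarrow> bool" where
  "ss_truss V E dRN loc tp nT Tq S ES k' d \<sigma> \<theta> \<longleftrightarrow>
     kd_truss V E S ES k' d
     \<and> (\<forall>u\<in>S. \<forall>v\<in>S. avg_dist_RN dRN loc u v < \<sigma>)
     \<and> (\<forall>u\<in>S. \<forall>v\<in>S. \<exists>p. walk E p \<and> set p \<subseteq> S \<and> hd p = u \<and> last p = v
                          \<and> influence tp nT Tq p \<ge> \<theta>)"

definition lb_k :: "('u \<Rightarrow> 'u \<Rightarrow> bool) \<Rightarrow> 'u set \<Rightarrow> 'u \<Rightarrow> nat" where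
  "lb_k E e p = Min ((\<lambda>u. dist_SN E u p) ` e)"

definition ub_k :: "('u \<Rightarrow> 'u \<Rightarrow> bool) \<Rightarrow> 'u set \<Rightarrow> 'u \<Rightarrow> nat" where
  "ub_k E e p = Max ((\<lambda>u. dist_SN E u p) ` e)"

definition c_k :: "('u \<Rightarrow> 'u \<Rightarrow> bool) \<Rightarrow> 'u \<Rightarrow> 'u set \<Rightarrow> 'u \<Rightarrow> int" where
  "c_k E q e p =
     (if dist_SN E q p < lb_k E e p then int (lb_k E e p) - int (dist_SN E q p)
      else if dist_SN E q p > ub_k E e p then int (dist_SN E q p) - int (ub_k E e p)
      else 0)"

definition lb_dist_SN :: "('u \<Rightarrow> 'u \<Rightarrow> bool) \<Rightarrow> 'u \<Rightarrow> 'u set \<Rightarrow> nat \<Rightarrow> (nat \<Rightarrow> 'u) \<Rightarrow> int" where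
  "lb_dist_SN E q e h spiv = Max ((\<lambda>k. c_k E q e (spiv k)) ` {1..h})"

end

theory Submission
  imports Defs
begin

(* The pivot bound is the reverse triangle inequality: for any pivot p and any u in e,
   |dist(q,p) - dist(u,p)| <= dist(q,u), and c_k only lower-bounds the left-hand side
   by comparing dist(q,p) with the range [lb_k, ub_k] of dist(., p) over e. Hence
   lb_dist_SN <= dist(q,u), while membership of q and u in a (k',d)-truss forces
   dist(q,u) < d. *)

definition reachable :: "('u \<Rightarrow> 'u \<Rightarrow> bool) \<Rightarrow> 'u \<Rightarrow> 'u \<Rightarrow> bool" where
  "reachable E u v \<longleftrightarrow> (\<exists>p. walk E p \<and> hd p = u \<and> last p = v)"

lemma walk_iff_successively: "walk E p \<longleftrightarrow> p \<noteq> [] \<and> successively E p"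
  by (simp add: walk_def successively_conv_nth)

lemma walk_rev:
  assumes "symp E"
  shows "walk E (rev p) \<longleftrightarrow> walk E p"
proof -
  have flip: "(\<lambda>x y. E y x) = E" using assms by (auto simp: symp_def)
  show ?thesis unfolding walk_iff_successively successively_rev flip by simp
qed

lemma walk_append_tl:
  assumes "walk E p" "walk E r" "last p = hd r"
  shows "walk E (p @ tl r)"
proof -
  obtain y ys where "r = y # ys" using assms(2) by (cases r) (auto simp: walk_def)
  then show ?thesis using assms
    by (auto simp: walk_iff_successively successively_append_iff successively_Cons)
qed

lemma social_network_reachable:
  "social_network V E \<Longrightarrow> u \<in> V \<Longrightarrow> v \<in> V \<Longrightarrow> reachable E u v"
  by (simp add: social_network_def reachable_def)

lemma social_network_symp: "social_network V E \<Longrightarrow> symp E"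
  by (auto simp: social_network_def symp_def)

lemma dist_SN_shortest_walk:
  assumes "reachable E u v"
  obtains p where "walk E p" "hd p = u" "last p = v" "length p = Suc (dist_SN E u v)"
proof -
  obtain p where p: "walk E p" "hd p = u" "last p = v"
    using assms by (auto simp: reachable_def)
  then have "length p = Suc (length p - 1)" by (simp add: walk_def)
  with p have "\<exists>n p. walk E p \<and> hd p = u \<and> last p = v \<and> length p = Suc n" by blast
  from LeastI_ex[OF this] show thesis
    using that unfolding dist_SN_def by blast
qed

lemma dist_SN_le_walk:
  assumes "walk E p" "hd p = u" "last p = v"
  shows "dist_SN E u v \<le> length p - 1"
  unfolding dist_SN_def
proof (rule Least_le)
  show "\<exists>p'. walk E p' \<and> hd p' = u \<and> last p' = v \<and> length p' = Suc (length p - 1)"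
    using assms by (auto simp: walk_def)
qed

(* No reachability hypothesis: reversal makes the two LEAST-predicates equivalent,
   so both sides agree even when they are the junk value of an empty predicate. *)
lemma dist_SN_commute:
  assumes "symp E"
  shows "dist_SN E u v = dist_SN E v u"
proof -
  have "(\<exists>p. walk E p \<and> hd p = u \<and> last p = v \<and> length p = Suc n) \<longleftrightarrow>
        (\<exists>p. walk E p \<and> hd p = v \<and> last p = u \<and> length p = Suc n)" for u v n
    by (metis walk_rev[OF assms] last_rev length_rev rev_rev_ident)
  then show ?thesis by (simp add: dist_SN_def)
qed

lemma dist_SN_triangle:
  assumes "reachable E x y" "reachable E y z"
  shows "dist_SN E x z \<le> dist_SN E x y + dist_SN E y z"
proof -
  obtain p where p: "walk E p" "hd p = x" "last p = y" "length p = Suc (dist_SN E x y)"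
    using dist_SN_shortest_walk[OF assms(1)] .
  obtain r where r: "walk E r" "hd r = y" "last r = z" "length r = Suc (dist_SN E y z)"
    using dist_SN_shortest_walk[OF assms(2)] .
  have ne: "p \<noteq> []" "r \<noteq> []" using p(1) r(1) by (simp_all add: walk_def)
  have "walk E (p @ tl r)" using walk_append_tl[OF p(1) r(1)] p(3) r(2) by simp
  moreover have "hd (p @ tl r) = x" using ne p by simp
  moreover have "last (p @ tl r) = z" using ne p r by (cases r) auto
  ultimately have "dist_SN E x z \<le> length (p @ tl r) - 1" by (rule dist_SN_le_walk)
  then show ?thesis using p r by simp
qed

lemma c_k_le_dist_SN:
  assumes G: "social_network V E" and "e \<subseteq> V" "u \<in> e" "q \<in> V" "p \<in> V"
  shows "c_k E q e p \<le> int (dist_SN E q u)"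
proof -
  have "finite e" using G assms(2) finite_subset by (auto simp: social_network_def)
  then have range: "lb_k E e p \<le> dist_SN E u p" "dist_SN E u p \<le> ub_k E e p"
    using \<open>u \<in> e\<close> by (auto simp: lb_k_def ub_k_def)
  have "u \<in> V" using assms(2,3) by blast
  note reach = social_network_reachable[OF G]
  have "dist_SN E q p \<le> dist_SN E q u + dist_SN E u p"
    by (rule dist_SN_triangle[OF reach[OF \<open>q \<in> V\<close> \<open>u \<in> V\<close>] reach[OF \<open>u \<in> V\<close> \<open>p \<in> V\<close>]])
  moreover have "dist_SN E u p \<le> dist_SN E u q + dist_SN E q p"
    by (rule dist_SN_triangle[OF reach[OF \<open>u \<in> V\<close> \<open>q \<in> V\<close>] reach[OF \<open>q \<in> V\<close> \<open>p \<in> V\<close>]])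
  moreover have "dist_SN E u q = dist_SN E q u"
    using dist_SN_commute[OF social_network_symp[OF G]] .
  ultimately show ?thesis using range by (auto simp: c_k_def)
qed

lemma lb_dist_SN_le_dist_SN:
  assumes "social_network V E" "e \<subseteq> V" "u \<in> e" "q \<in> V"
    and "h \<ge> 1" "\<forall>k\<in>{1..h}. spiv k \<in> V"
  shows "lb_dist_SN E q e h spiv \<le> int (dist_SN E q u)"
proof -
  have "c_k E q e (spiv k) \<le> int (dist_SN E q u)" if "k \<in> {1..h}" for k
    using c_k_le_dist_SN[OF assms(1-4)] assms(6) that by blast
  then show ?thesis using \<open>h \<ge> 1\<close> unfolding lb_dist_SN_def by (subst Max_le_iff) auto
qed

theorem lemma8:
  fixes V :: "'u set" and E :: "'u \<Rightarrow> 'u \<Rightarrow> bool"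
    and dRN :: "'l \<Rightarrow> 'l \<Rightarrow> real" and loc :: "'u \<Rightarrow> 'l list"
    and tp :: "'u \<Rightarrow> 'u \<Rightarrow> nat \<Rightarrow> real" and nT :: nat
    and q :: 'u and d :: nat and e :: "'u set" and h :: nat and spiv :: "nat \<Rightarrow> 'u"
  assumes "social_network V E"
    and "q \<in> V" and "d \<ge> 1"
    and "e \<subseteq> V" and "e \<noteq> {}"
    and "h \<ge> 1" and "\<forall>k\<in>{1..h}. spiv k \<in> V"
    and "lb_dist_SN E q e h spiv > int d"
  shows "\<forall>S ES k' \<sigma> \<theta> Tq. ss_truss V E dRN loc tp nT Tq S ES k' d \<sigma> \<theta> \<and> q \<in> S
           \<longrightarrow> (\<forall>u\<in>e. u \<notin> S)"
proof (intro allI impI ballI notI)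
  fix S ES k' \<sigma> \<theta> Tq u
  assume "ss_truss V E dRN loc tp nT Tq S ES k' d \<sigma> \<theta> \<and> q \<in> S" and "u \<in> e" "u \<in> S"
  then have "dist_SN E q u < d" by (auto simp: ss_truss_def kd_truss_def)
  moreover have "lb_dist_SN E q e h spiv \<le> int (dist_SN E q u)"
    using lb_dist_SN_le_dist_SN[OF assms(1,4) \<open>u \<in> e\<close> assms(2,6,7)] .
  ultimately show False using assms(8) by simp
qed

end
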